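(* Let $\mathcal M$ be an o-minimal structure in a language $\mathcal L$ with universe $M$, and $\mathcal N$ an expansion of $\mathcal M$ such that every open definable set is $\mathcal L$-definable and $\mathcal N$ admits a dimension function $\dim$ compatible with $\mathcal M$. Let $F:X\subseteq M^n\to M^m$ be an $\mathcal L$-definable map and $D\subseteq X$ a definable set with $\dim(X\setminus D)<\dim X$, such that the restriction of $F$ to $D$ is injective. Then there is an $\mathcal L$-definable set $Y\subseteq X$ with $\dim(X\setminus Y)<\dim X$ such that the restriction of $F$ to $Y$ is injective.
   Context: "Definable" means definable in $\mathcal N$ with parameters; "$\mathcal L$-definable" means definable in $\mathcal M$ with parameters. A dimension function compatible with $\mathcal M$ is a map $\dim$ from definable sets to $\{-\infty\}\cup\mathbb N$ such that for all definable $X,Y\subseteq M^n$, $a\in M$: (D1) $\dim\{a\}=0$, $\dim M=1$, $\dim X=-\infty$ iff $X=\emptyset$; (D2) $\dim(X\cup Y)=\max\{\dim X,\dim Y\}$; (D3) for a definable family $\{X_t\}_{t\in I}$ of pairwise disjoint sets: (a) each $\{t\in I:\dim X_t=d\}$ is definable; (b) if all $X_t$ have dimension $k$ then $\dim\bigcup_t X_t=\dim I+k$; (D4) definable bijections preserve $\dim$; (D5) on $\mathcal L$-definable sets $\dim$ is the o-minimal dimension; (D6) every definable $f:M^n\to M$ agrees with an $\mathcal L$-definable $F:M^n\to M$ outside a definable set of dimension $<n$. *)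

theory Defs
  imports Main "HOL-Library.Extended_Real"
begin

text \<open>Tuples in M^n are lists of length n. A "structure" on the universe 'a
(van den Dries style) is a family S n of subsets of M^n closed under the usual
operations; this is exactly the collection of sets definable with parameters
in some first-order structure with universe 'a.\<close>

definition is_structure :: "(nat \<Rightarrow> 'a list set set) \<Rightarrow> bool" where
  "is_structure S \<longleftrightarrow>
     (\<forall>n. \<forall>A\<in>S n. A \<subseteq> {x. length x = n}) \<and>
     (\<forall>n. {x. length x = n} \<in> S n) \<and>
     (\<forall>n. \<forall>A\<in>S n. \<forall>B\<in>S n. A \<union> B \<in> S n \<and> A - B \<in> S n) \<and>
     (\<forall>n. \<forall>A\<in>S n. {x @ [y] | x y. x \<in> A} \<in> S (Suc n) \<and> {y # x | x y. x \<in> A} \<in> S (Suc n)) \<and>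
     (\<forall>n i j. i < n \<longrightarrow> j < n \<longrightarrow> {x. length x = n \<and> x ! i = x ! j} \<in> S n) \<and>
     (\<forall>n. \<forall>A\<in>S (Suc n). butlast ` A \<in> S n) \<and>
     (\<forall>a. {[a]} \<in> S 1)"

text \<open>Open intervals with endpoints in M \<union> {-\<infinity>,+\<infinity>} (None = infinite endpoint).\<close>
definition in_ival :: "'a::linorder option \<Rightarrow> 'a option \<Rightarrow> 'a \<Rightarrow> bool" where
  "in_ival l u x \<longleftrightarrow> (\<forall>a. l = Some a \<longrightarrow> a < x) \<and> (\<forall>b. u = Some b \<longrightarrow> x < b)"

definition o_minimal :: "(nat \<Rightarrow> 'a::linorder list set set) \<Rightarrow> bool" where
  "o_minimal S \<longleftrightarrow> is_structure S \<and>
     {[x, y] | x y. x < y} \<in> S 2 \<and>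
     (\<forall>A\<in>S 1. \<exists>P I. finite P \<and> finite I \<and>
        A = {[x] | x. x \<in> P} \<union> {[x] | x. \<exists>(l, u)\<in>I. in_ival l u x})"

definition open_n :: "nat \<Rightarrow> 'a::linorder list set \<Rightarrow> bool" where
  "open_n n U \<longleftrightarrow> (\<forall>x\<in>U. length x = n) \<and>
     (\<forall>x\<in>U. \<exists>ls us. length ls = n \<and> length us = n \<and>
        (\<forall>i<n. in_ival (ls ! i) (us ! i) (x ! i)) \<and>
        {y. length y = n \<and> (\<forall>i<n. in_ival (ls ! i) (us ! i) (y ! i))} \<subseteq> U)"

definition coord_proj :: "nat set \<Rightarrow> 'a list \<Rightarrow> 'a list" where
  "coord_proj J x = map (\<lambda>i. x ! i) (sorted_list_of_set J)"

definition omin_dim :: "nat \<Rightarrow> 'a::linorder list set \<Rightarrow> ereal" where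
  "omin_dim n A = (if A = {} then - \<infinity> else
     ereal (real (Max {card J | J. J \<subseteq> {..<n} \<and>
        (\<exists>U. U \<noteq> {} \<and> open_n (card J) U \<and> U \<subseteq> coord_proj J ` A)})))"

text \<open>Dimension function on the sets T (definable in N) compatible with S
(definable in M). -\<infinity> is the ereal -\<infinity>.\<close>
definition dim_function ::
  "(nat \<Rightarrow> 'a::linorder list set set) \<Rightarrow> (nat \<Rightarrow> 'a list set set) \<Rightarrow> ('a list set \<Rightarrow> ereal) \<Rightarrow> bool" where
  "dim_function S T dm \<longleftrightarrow>
     (\<forall>n. \<forall>X\<in>T n. dm X \<in> {- \<infinity>} \<union> range (\<lambda>k::nat. ereal (real k))) \<and>
     \<comment> \<open>D1\<close>
     (\<forall>a. dm {[a]} = 0) \<and> dm {[x] | x. True} = 1 \<and>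
     (\<forall>n. \<forall>X\<in>T n. dm X = - \<infinity> \<longleftrightarrow> X = {}) \<and>
     \<comment> \<open>D2\<close>
     (\<forall>n. \<forall>X\<in>T n. \<forall>Y\<in>T n. dm (X \<union> Y) = max (dm X) (dm Y)) \<and>
     \<comment> \<open>D3: family X_t = {x. t @ x \<in> Z}, t \<in> I\<close>
     (\<forall>p n I Z. I \<in> T p \<longrightarrow> Z \<in> T (p + n) \<longrightarrow>
        (\<forall>s\<in>I. \<forall>t\<in>I. s \<noteq> t \<longrightarrow>
           {x. length x = n \<and> s @ x \<in> Z} \<inter> {x. length x = n \<and> t @ x \<in> Z} = {}) \<longrightarrow>
        (\<forall>d. {t\<in>I. dm {x. length x = n \<and> t @ x \<in> Z} = d} \<in> T p) \<and>
        (\<forall>k::nat. (\<forall>t\<in>I. dm {x. length x = n \<and> t @ x \<in> Z} = ereal (real k)) \<longrightarrow>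
           dm (\<Union>t\<in>I. {x. length x = n \<and> t @ x \<in> Z}) = dm I + ereal (real k))) \<and>
     \<comment> \<open>D4\<close>
     (\<forall>n m X Y f. X \<in> T n \<longrightarrow> Y \<in> T m \<longrightarrow> (\<forall>x\<in>X. length (f x) = m) \<longrightarrow>
        {x @ f x | x. x \<in> X} \<in> T (n + m) \<longrightarrow> bij_betw f X Y \<longrightarrow> dm X = dm Y) \<and>
     \<comment> \<open>D5\<close>
     (\<forall>n. \<forall>A\<in>S n. dm A = omin_dim n A) \<and>
     \<comment> \<open>D6\<close>
     (\<forall>n f. {x @ [f x] | x. length x = n} \<in> T (Suc n) \<longrightarrow>
        (\<exists>F E. {x @ [F x] | x. length x = n} \<in> S (Suc n) \<and> E \<in> T n \<and>
           dm E < ereal (real n) \<and> (\<forall>x. length x = n \<longrightarrow> x \<notin> E \<longrightarrow> f x = F x)))"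

end

(*
  Take Y = X - B, where B is the set of points of X whose F-value is also taken at another
  point of X; B is L-definable because it is a projection of the L-definable set of pairs with
  equal F-values, and F is injective on Y. Since F is injective on D, each t in B \<inter> D has a
  nonempty fibre {y \<in> X - D. F t = F y}, and these fibres are pairwise disjoint. Stratifying
  B \<inter> D by the dimension of the fibres, axiom (D3) gives dim (B \<inter> D) \<le> dim (X - D), hence
  dim B \<le> dim (X - D) < dim X. Only the structure axioms, S \<subseteq> T and (D1)-(D3) are used.
*)
theory Submission
  imports Defs "HOL-Library.Disjoint_Sets"
begin

definition fibre :: "nat \<Rightarrow> 'a list set \<Rightarrow> 'a list \<Rightarrow> 'a list set" where
  "fibre k Z t = {x. length x = k \<and> t @ x \<in> Z}"

lemma fibre_append_relation:
  "length t = p \<Longrightarrow>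
    fibre k {s @ y | s y. length s = p \<and> length y = k \<and> R s y} t = {y. length y = k \<and> R t y}"
  by (auto simp: fibre_def)

lemma take_image_append_relation:
  "take p ` {s @ y | s y. length s = p \<and> length y = k \<and> R s y} =
    {s. length s = p \<and> (\<exists>y. length y = k \<and> R s y)}"
  by force

lemma graph_pairs_diagonal:
  assumes X: "\<forall>x\<in>X. length x = n" and F: "\<forall>x\<in>X. length (F x) = m"
  shows "{a @ b | a b. a \<in> {x @ F x | x. x \<in> X} \<and> b \<in> {x @ F x | x. x \<in> X}} \<inter>
      {u. length u = (n + m) + (n + m) \<and> (\<forall>i<m. u ! (n + i) = u ! (n + m + n + i))} =
    {(x @ F x) @ y @ F y | x y. x \<in> X \<and> y \<in> X \<and> F x = F y}"
proof -
  have diag_iff: "(\<forall>i<m. ((x @ F x) @ y @ F y) ! (n + i) = ((x @ F x) @ y @ F y) ! (n + m + n + i))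
      \<longleftrightarrow> F x = F y" if "x \<in> X" "y \<in> X" for x y
    using that X F by (auto simp: nth_append list_eq_iff_nth_eq)
  show ?thesis
  proof (intro set_eqI iffI)
    fix u assume "u \<in> {a @ b | a b. a \<in> {x @ F x | x. x \<in> X} \<and> b \<in> {x @ F x | x. x \<in> X}} \<inter>
      {u. length u = (n + m) + (n + m) \<and> (\<forall>i<m. u ! (n + i) = u ! (n + m + n + i))}"
    then obtain x y where "u = (x @ F x) @ y @ F y" "x \<in> X" "y \<in> X"
      and "\<forall>i<m. u ! (n + i) = u ! (n + m + n + i)"
      by blast
    with diag_iff show "u \<in> {(x @ F x) @ y @ F y | x y. x \<in> X \<and> y \<in> X \<and> F x = F y}"
      by blast
  next
    fix u assume "u \<in> {(x @ F x) @ y @ F y | x y. x \<in> X \<and> y \<in> X \<and> F x = F y}"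
    then obtain x y where xy: "u = (x @ F x) @ y @ F y" "x \<in> X" "y \<in> X" "F x = F y"
      by blast
    then have "length u = (n + m) + (n + m)" and "\<forall>i<m. u ! (n + i) = u ! (n + m + n + i)"
      using X F diag_iff[OF xy(2,3)] by simp_all
    with xy show "u \<in> {a @ b | a b. a \<in> {x @ F x | x. x \<in> X} \<and> b \<in> {x @ F x | x. x \<in> X}} \<inter>
      {u. length u = (n + m) + (n + m) \<and> (\<forall>i<m. u ! (n + i) = u ! (n + m + n + i))}"
      by blast
  qed
qed

locale definable_sets =
  fixes S :: "nat \<Rightarrow> 'a list set set"
  assumes is_structure: "is_structure S"
begin

lemma closure_properties:
  shows lengthD: "\<And>A k x. A \<in> S k \<Longrightarrow> x \<in> A \<Longrightarrow> length x = k"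
    and full: "\<And>k. {x. length x = k} \<in> S k"
    and Un: "\<And>A B k. A \<in> S k \<Longrightarrow> B \<in> S k \<Longrightarrow> A \<union> B \<in> S k"
    and Diff: "\<And>A B k. A \<in> S k \<Longrightarrow> B \<in> S k \<Longrightarrow> A - B \<in> S k"
    and cons: "\<And>A k. A \<in> S k \<Longrightarrow> {y # x | x y. x \<in> A} \<in> S (Suc k)"
    and diagonal: "\<And>i j k. i < k \<Longrightarrow> j < k \<Longrightarrow> {x. length x = k \<and> x ! i = x ! j} \<in> S k"
    and butlast_image: "\<And>A k. A \<in> S (Suc k) \<Longrightarrow> butlast ` A \<in> S k"
    and singleton: "\<And>a. {[a]} \<in> S 1"
  using is_structure unfolding is_structure_def by auto

lemma Int: "A \<in> S k \<Longrightarrow> B \<in> S k \<Longrightarrow> A \<inter> B \<in> S k"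
  by (metis Diff Diff_Diff_Int)

lemma empty_mem: "{} \<in> S k"
  using Diff[OF full full] by simp

lemma UN_finite: "finite J \<Longrightarrow> (\<And>j. j \<in> J \<Longrightarrow> A j \<in> S k) \<Longrightarrow> (\<Union>j\<in>J. A j) \<in> S k"
  by (induction J rule: finite_induct) (simp_all add: empty_mem Un)

lemma take_image: "A \<in> S (k + j) \<Longrightarrow> take k ` A \<in> S k"
proof (induction j arbitrary: A)
  case 0
  have "take k ` A = A"
    using lengthD[OF "0.prems"] by (simp cong: image_cong)
  with "0.prems" show ?case by simp
next
  case (Suc j)
  have "take k ` A = take k ` butlast ` A"
    unfolding image_image
    using lengthD[OF Suc.prems] by (simp add: butlast_conv_take cong: image_cong)
  with Suc.IH[of "butlast ` A"] butlast_image[of A] Suc.prems show ?case by simp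
qed

lemma prefix_cylinder: "A \<in> S k \<Longrightarrow> {y @ x | x y. x \<in> A \<and> length y = j} \<in> S (j + k)"
proof (induction j)
  case 0
  then show ?case by (simp cong: Collect_cong)
next
  case (Suc j)
  have "{y @ x | x y. x \<in> A \<and> length y = Suc j} =
        {c # w | w c. w \<in> {y @ x | x y. x \<in> A \<and> length y = j}}"
  proof (intro set_eqI iffI)
    fix z assume "z \<in> {y @ x | x y. x \<in> A \<and> length y = Suc j}"
    then show "z \<in> {c # w | w c. w \<in> {y @ x | x y. x \<in> A \<and> length y = j}}"
      by (auto simp: length_Suc_conv) blast
  next
    fix z assume "z \<in> {c # w | w c. w \<in> {y @ x | x y. x \<in> A \<and> length y = j}}"
    then obtain c x y where "z = (c # y) @ x" "x \<in> A" "length (c # y) = Suc j" by auto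
    then show "z \<in> {y @ x | x y. x \<in> A \<and> length y = Suc j}" by blast
  qed
  with cons[OF Suc.IH[OF Suc.prems]] show ?case by simp
qed

lemma diagonals:
  fixes k :: nat
  shows "(\<forall>i<k. \<sigma> i < N \<and> \<tau> i < N) \<Longrightarrow> {z. length z = N \<and> (\<forall>i<k. z ! \<sigma> i = z ! \<tau> i)} \<in> S N"
proof (induction k)
  case 0
  then show ?case using full by simp
next
  case (Suc k)
  have eq: "{z. length z = N \<and> (\<forall>i<Suc k. z ! \<sigma> i = z ! \<tau> i)} =
     {z. length z = N \<and> (\<forall>i<k. z ! \<sigma> i = z ! \<tau> i)} \<inter> {z. length z = N \<and> z ! \<sigma> k = z ! \<tau> k}"
    using less_Suc_eq by auto
  have "{z. length z = N \<and> (\<forall>i<k. z ! \<sigma> i = z ! \<tau> i)} \<in> S N"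
    using Suc by simp
  moreover have "{z. length z = N \<and> z ! \<sigma> k = z ! \<tau> k} \<in> S N"
    using Suc.prems by (simp add: diagonal)
  ultimately show ?case unfolding eq by (rule Int)
qed

lemma coordinate_image:
  assumes A: "A \<in> S N" and \<sigma>: "\<forall>i<k. \<sigma> i < N"
  shows "(\<lambda>z. map (\<lambda>i. z ! \<sigma> i) [0..<k]) ` A \<in> S k"
proof -
  define c where "c z = map (\<lambda>i. z ! \<sigma> i) [0..<k]" for z :: "'a list"
  \<comment> \<open>the graph of c over A, whose projection to the first k coordinates is c ` A\<close>
  define W where "W = {w @ z | z w. z \<in> A \<and> length w = k} \<inter>
    {u. length u = k + N \<and> (\<forall>i<k. u ! i = u ! (k + \<sigma> i))}"
  have "W \<in> S (k + N)"
    unfolding W_def using \<sigma> by (intro Int prefix_cylinder A diagonals) auto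
  moreover have "W = (\<lambda>z. c z @ z) ` A"
  proof -
    have diag_iff: "(\<forall>i<k. (w @ z) ! i = (w @ z) ! (k + \<sigma> i)) \<longleftrightarrow> w = c z"
      if "length w = k" for w z
      using that by (auto simp: c_def nth_append list_eq_iff_nth_eq)
    show ?thesis
    proof (intro set_eqI iffI)
      fix u assume "u \<in> W"
      then obtain w z where "u = w @ z" "z \<in> A" "length w = k"
        and "\<forall>i<k. u ! i = u ! (k + \<sigma> i)"
        unfolding W_def by blast
      with diag_iff show "u \<in> (\<lambda>z. c z @ z) ` A" by blast
    next
      fix u assume "u \<in> (\<lambda>z. c z @ z) ` A"
      then obtain z where "u = c z @ z" "z \<in> A" by blast
      moreover have "length (c z) = k" by (simp add: c_def)
      ultimately show "u \<in> W"
        unfolding W_def using diag_iff[of "c z" z] lengthD[OF A] by auto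
    qed
  qed
  ultimately have "take k ` (\<lambda>z. c z @ z) ` A \<in> S k"
    using take_image by metis
  then show ?thesis
    by (simp add: image_image c_def)
qed

lemma drop_image:
  assumes A: "A \<in> S (p + k)"
  shows "drop p ` A \<in> S k"
proof -
  have "drop p ` A = (\<lambda>z. map (\<lambda>i. z ! (p + i)) [0..<k]) ` A"
    using lengthD[OF A] by (intro image_cong) (auto simp: list_eq_iff_nth_eq)
  with coordinate_image[OF A, of k] show ?thesis
    by simp
qed

lemma suffix_cylinder: "A \<in> S k \<Longrightarrow> {x @ y | x y. x \<in> A \<and> length y = j} \<in> S (k + j)"
proof -
  assume A: "A \<in> S k"
  define \<sigma> where "\<sigma> i = (if i < k then j + i else i - k)" for i
  have "(\<lambda>z. map (\<lambda>i. z ! \<sigma> i) [0..<k + j]) ` {y @ x | x y. x \<in> A \<and> length y = j} \<in> S (k + j)"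
    using prefix_cylinder[OF A, of j] by (rule coordinate_image) (auto simp: \<sigma>_def)
  moreover have "(\<lambda>z. map (\<lambda>i. z ! \<sigma> i) [0..<k + j]) ` {y @ x | x y. x \<in> A \<and> length y = j}
      = {x @ y | x y. x \<in> A \<and> length y = j}"
  proof -
    have "map (\<lambda>i. (y @ x) ! \<sigma> i) [0..<k + j] = x @ y" if "x \<in> A" "length y = j" for x y
      using that lengthD[OF A] by (auto simp: \<sigma>_def nth_append list_eq_iff_nth_eq)
    then show ?thesis
      by (auto simp: image_iff) metis+
  qed
  ultimately show ?thesis
    by simp
qed

lemma product:
  assumes A: "A \<in> S k" and C: "C \<in> S j"
  shows "{x @ y | x y. x \<in> A \<and> y \<in> C} \<in> S (k + j)"
proof -
  have eq: "{x @ y | x y. x \<in> A \<and> y \<in> C} =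
      {x @ y | x y. x \<in> A \<and> length y = j} \<inter> {y @ x | x y. x \<in> C \<and> length y = k}"
  proof (intro set_eqI iffI)
    fix z assume "z \<in> {x @ y | x y. x \<in> A \<and> y \<in> C}"
    then obtain x y where "z = x @ y" "x \<in> A" "y \<in> C" by blast
    with lengthD[OF A] lengthD[OF C] show
      "z \<in> {x @ y | x y. x \<in> A \<and> length y = j} \<inter> {y @ x | x y. x \<in> C \<and> length y = k}"
      by blast
  next
    fix z assume "z \<in> {x @ y | x y. x \<in> A \<and> length y = j} \<inter> {y @ x | x y. x \<in> C \<and> length y = k}"
    then obtain x y x' y' where "z = x @ y" "x \<in> A" "z = y' @ x'" "x' \<in> C" "length y' = k"
      by blast
    with lengthD[OF A] show "z \<in> {x @ y | x y. x \<in> A \<and> y \<in> C}"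
      by (auto simp: append_eq_append_conv)
  qed
  show ?thesis
    unfolding eq by (rule Int[OF suffix_cylinder[OF A] prefix_cylinder[OF C]])
qed

lemma singleton_list: "{t} \<in> S (length t)"
proof (induction t)
  case Nil
  have "{[]} = {x :: 'a list. length x = length ([] :: 'a list)}" by auto
  with full show ?case by metis
next
  case (Cons a t)
  have "{a # t} = {x @ y | x y. x \<in> {[a]} \<and> y \<in> {t}}" by simp
  with product[OF singleton Cons.IH] show ?case by simp
qed

lemma fibre_Union:
  assumes I: "I \<in> S p" and A: "A \<in> S (p + k)"
  shows "(\<Union>t\<in>I. fibre k A t) \<in> S k"
proof -
  have "(\<Union>t\<in>I. fibre k A t) = drop p ` (A \<inter> {t @ x | t x. t \<in> I \<and> x \<in> {x. length x = k}})"
  proof (intro set_eqI iffI)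
    fix x assume "x \<in> (\<Union>t\<in>I. fibre k A t)"
    then obtain t where "t \<in> I" "length x = k" "t @ x \<in> A"
      by (auto simp: fibre_def)
    moreover have "length t = p" using lengthD[OF I \<open>t \<in> I\<close>] .
    ultimately show "x \<in> drop p ` (A \<inter> {t @ x | t x. t \<in> I \<and> x \<in> {x. length x = k}})"
      by (intro image_eqI[of _ _ "t @ x"]) auto
  next
    fix x assume "x \<in> drop p ` (A \<inter> {t @ x | t x. t \<in> I \<and> x \<in> {x. length x = k}})"
    then obtain t y where "x = drop p (t @ y)" "t @ y \<in> A" "t \<in> I" "length y = k"
      by blast
    moreover have "length t = p" using lengthD[OF I \<open>t \<in> I\<close>] .
    ultimately show "x \<in> (\<Union>t\<in>I. fibre k A t)"
      by (auto simp: fibre_def)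
  qed
  with drop_image Int[OF A product[OF I full]] show ?thesis
    by simp
qed

lemma fibre: "A \<in> S (p + k) \<Longrightarrow> length t = p \<Longrightarrow> fibre k A t \<in> S k"
  using fibre_Union[of "{t}" p A k] singleton_list[of t] by simp

lemma equal_value_pairs:
  assumes X: "X \<in> S n" and F: "\<forall>x\<in>X. length (F x) = m"
    and graph: "{x @ F x | x. x \<in> X} \<in> S (n + m)"
  shows "{x @ y | x y. x \<in> X \<and> y \<in> X \<and> F x = F y} \<in> S (n + n)"
proof -
  \<comment> \<open>picks the blocks x and y out of (x @ F x) @ y @ F y\<close>
  define \<sigma> where "\<sigma> i = (if i < n then i else m + i)" for i
  have X_len: "\<forall>x\<in>X. length x = n"
    using lengthD[OF X] by blast
  have "{(x @ F x) @ y @ F y | x y. x \<in> X \<and> y \<in> X \<and> F x = F y} \<in> S ((n + m) + (n + m))"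
    unfolding graph_pairs_diagonal[OF X_len F, symmetric]
    by (intro Int product graph diagonals) auto
  then have "(\<lambda>u. map (\<lambda>i. u ! \<sigma> i) [0..<n + n]) `
      {(x @ F x) @ y @ F y | x y. x \<in> X \<and> y \<in> X \<and> F x = F y} \<in> S (n + n)"
    by (rule coordinate_image) (auto simp: \<sigma>_def)
  moreover have "map (\<lambda>i. ((x @ F x) @ y @ F y) ! \<sigma> i) [0..<n + n] = x @ y"
    if "x \<in> X" "y \<in> X" for x y
    using that F X_len by (auto simp: \<sigma>_def nth_append list_eq_iff_nth_eq)
  then have "(\<lambda>u. map (\<lambda>i. u ! \<sigma> i) [0..<n + n]) `
      {(x @ F x) @ y @ F y | x y. x \<in> X \<and> y \<in> X \<and> F x = F y} =
      {x @ y | x y. x \<in> X \<and> y \<in> X \<and> F x = F y}"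
    by (auto simp: image_iff) metis+
  ultimately show ?thesis
    by simp
qed

lemma non_injective_points:
  assumes X: "X \<in> S n" and F: "\<forall>x\<in>X. length (F x) = m"
    and graph: "{x @ F x | x. x \<in> X} \<in> S (n + m)"
  shows "{x \<in> X. \<exists>y\<in>X. y \<noteq> x \<and> F x = F y} \<in> S n"
proof -
  define \<Delta> :: "'a list set" where "\<Delta> = {u. length u = n + n \<and> (\<forall>i<n. u ! i = u ! (n + i))}"
  define R where "R x y \<longleftrightarrow> x \<in> X \<and> y \<in> X \<and> F x = F y \<and> y \<noteq> x" for x y
  have X_len: "\<forall>x\<in>X. length x = n"
    using lengthD[OF X] by blast
  have "x @ y \<in> \<Delta> \<longleftrightarrow> x = y" if "x \<in> X" "y \<in> X" for x y
    using that X_len by (auto simp: \<Delta>_def nth_append list_eq_iff_nth_eq)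
  then have "{x @ y | x y. x \<in> X \<and> y \<in> X \<and> F x = F y} - \<Delta> =
      {x @ y | x y. length x = n \<and> length y = n \<and> R x y}"
    unfolding R_def using X_len by auto blast
  moreover have "{x @ y | x y. x \<in> X \<and> y \<in> X \<and> F x = F y} - \<Delta> \<in> S (n + n)"
    unfolding \<Delta>_def by (intro Diff equal_value_pairs[OF X F graph] diagonals) auto
  ultimately have "take n ` {x @ y | x y. length x = n \<and> length y = n \<and> R x y} \<in> S n"
    by (simp add: take_image)
  moreover have "{x. length x = n \<and> (\<exists>y. length y = n \<and> R x y)} = {x \<in> X. \<exists>y\<in>X. y \<noteq> x \<and> F x = F y}"
    unfolding R_def using X_len by auto
  ultimately show ?thesis
    unfolding take_image_append_relation by simp
qed

end

locale dimension_function = definable_sets T for T :: "nat \<Rightarrow> 'a::linorder list set set" +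
  fixes S :: "nat \<Rightarrow> 'a list set set" and dm :: "'a list set \<Rightarrow> ereal"
  assumes dim_function: "dim_function S T dm"
begin

lemma dim_empty_iff: "A \<in> T k \<Longrightarrow> dm A = - \<infinity> \<longleftrightarrow> A = {}"
  using dim_function unfolding dim_function_def by (elim conjE) blast

lemma dim_nat: "A \<in> T k \<Longrightarrow> A \<noteq> {} \<Longrightarrow> \<exists>d::nat. dm A = real d"
proof -
  assume A: "A \<in> T k" "A \<noteq> {}"
  have "dm A \<in> {- \<infinity>} \<union> range (\<lambda>d::nat. ereal (real d))"
    using dim_function[unfolded dim_function_def, THEN conjunct1] A(1) by blast
  with A dim_empty_iff show ?thesis by auto
qed

lemma dim_Un: "A \<in> T k \<Longrightarrow> B \<in> T k \<Longrightarrow> dm (A \<union> B) = max (dm A) (dm B)"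
  using dim_function unfolding dim_function_def by (elim conjE) (simp only: Ball_def)

lemma dim_mono: "A \<in> T k \<Longrightarrow> B \<in> T k \<Longrightarrow> A \<subseteq> B \<Longrightarrow> dm A \<le> dm B"
  using dim_Un[of A k B] by (metis max.absorb_iff2 sup.absorb2)

lemma dim_UN_le:
  "finite J \<Longrightarrow> (\<And>j. j \<in> J \<Longrightarrow> A j \<in> T k) \<Longrightarrow> (\<And>j. j \<in> J \<Longrightarrow> dm (A j) \<le> c)
    \<Longrightarrow> dm (\<Union>j\<in>J. A j) \<le> c"
proof (induction J rule: finite_induct)
  case empty
  then show ?case using dim_empty_iff[OF empty_mem] by simp
next
  case (insert j J)
  have "(\<Union>i\<in>J. A i) \<in> T k"
    using insert.hyps(1) insert.prems(1) by (intro UN_finite) auto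
  moreover have "dm (\<Union>i\<in>J. A i) \<le> c"
    using insert.IH insert.prems by auto
  ultimately show ?case
    using dim_Un[of "A j" k "\<Union>i\<in>J. A i"] insert.prems by auto
qed

lemma dim_fibres:
  assumes "I \<in> T p" and "Z \<in> T (p + k)" and "disjoint_family_on (fibre k Z) I"
  shows dim_fibre_strata: "{t \<in> I. dm (fibre k Z t) = d} \<in> T p"
    and dim_UN_fibres: "(\<And>t. t \<in> I \<Longrightarrow> dm (fibre k Z t) = real j)
      \<Longrightarrow> dm (\<Union>t\<in>I. fibre k Z t) = dm I + real j"
proof -
  have "\<forall>p k I Z. I \<in> T p \<longrightarrow> Z \<in> T (p + k) \<longrightarrow> disjoint_family_on (fibre k Z) I \<longrightarrow>
      (\<forall>d. {t \<in> I. dm (fibre k Z t) = d} \<in> T p) \<and>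
      (\<forall>j::nat. (\<forall>t\<in>I. dm (fibre k Z t) = real j) \<longrightarrow> dm (\<Union>t\<in>I. fibre k Z t) = dm I + real j)"
    using dim_function unfolding dim_function_def disjoint_family_on_def fibre_def
    by (elim conjE) assumption
  note D3 = this[rule_format, OF assms]
  show "{t \<in> I. dm (fibre k Z t) = d} \<in> T p"
    using D3 by blast
  show "(\<And>t. t \<in> I \<Longrightarrow> dm (fibre k Z t) = real j) \<Longrightarrow> dm (\<Union>t\<in>I. fibre k Z t) = dm I + real j"
    using D3 by blast
qed

lemma dim_le_dim_UN_equidimensional_fibres:
  assumes "I \<in> T p" and "Z \<in> T (p + k)" and "disjoint_family_on (fibre k Z) I"
    and "\<And>t. t \<in> I \<Longrightarrow> dm (fibre k Z t) = real j"
  shows "dm I \<le> dm (\<Union>t\<in>I. fibre k Z t)"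
  using dim_UN_fibres[OF assms] ereal_le_add_self[of "real j" "dm I"] by simp

lemma dim_le_dim_UN_fibres:
  assumes I: "I \<in> T p" and Z: "Z \<in> T (p + k)"
    and disjoint: "disjoint_family_on (fibre k Z) I"
    and nonempty: "\<And>t. t \<in> I \<Longrightarrow> fibre k Z t \<noteq> {}"
  shows "dm I \<le> dm (\<Union>t\<in>I. fibre k Z t)"
proof (cases "I = {}")
  case True
  then show ?thesis using dim_empty_iff[OF I] by simp
next
  case False
  \<comment> \<open>Split I into the finitely many strata on which the fibre dimension j \<le> dim U is constant.\<close>
  define U where "U = (\<Union>t\<in>I. fibre k Z t)"
  have U: "U \<in> T k"
    unfolding U_def using fibre_Union[OF I Z] .
  obtain K :: nat where K: "dm U = real K"
    using dim_nat[OF U] False nonempty unfolding U_def by blast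
  have fibre_dim: "\<exists>j\<le>K. dm (fibre k Z t) = real j" if t: "t \<in> I" for t
  proof -
    have fibre_T: "fibre k Z t \<in> T k"
      using fibre[OF Z lengthD[OF I t]] .
    then obtain j :: nat where "dm (fibre k Z t) = real j"
      using dim_nat nonempty[OF t] by blast
    moreover have "dm (fibre k Z t) \<le> dm U"
      using dim_mono[OF fibre_T U] t unfolding U_def by blast
    ultimately show ?thesis
      using K by auto
  qed
  define stratum where "stratum j = {t \<in> I. dm (fibre k Z t) = real j}" for j :: nat
  have stratum_T: "stratum j \<in> T p" for j
    unfolding stratum_def using dim_fibre_strata[OF I Z disjoint] .
  have "dm (stratum j) \<le> dm U" for j
  proof -
    have "disjoint_family_on (fibre k Z) (stratum j)"
      using disjoint by (rule disjoint_family_on_mono[rotated]) (auto simp: stratum_def)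
    then have "dm (stratum j) \<le> dm (\<Union>t\<in>stratum j. fibre k Z t)"
      by (rule dim_le_dim_UN_equidimensional_fibres[OF stratum_T Z]) (simp add: stratum_def)
    also have "\<dots> \<le> dm U"
      by (rule dim_mono[OF fibre_Union[OF stratum_T Z] U]) (auto simp: U_def stratum_def)
    finally show ?thesis .
  qed
  moreover have "I = (\<Union>j\<in>{..K}. stratum j)"
    using fibre_dim by (auto simp: stratum_def)
  ultimately show ?thesis
    using dim_UN_le[of "{..K}" stratum p "dm U"] stratum_T unfolding U_def by simp
qed

lemma dim_collisions_le_dim_complement:
  assumes X: "X \<in> T n" and D: "D \<in> T n" "D \<subseteq> X" and inj: "inj_on F D"
    and pairs: "{x @ y | x y. x \<in> X \<and> y \<in> X \<and> F x = F y} \<in> T (n + n)"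
  shows "dm {t \<in> D. \<exists>y\<in>X. y \<noteq> t \<and> F t = F y} \<le> dm (X - D)"
proof -
  define R where "R t y \<longleftrightarrow> t \<in> D \<and> y \<in> X - D \<and> F t = F y" for t y
  define Z where "Z = {t @ y | t y. length t = n \<and> length y = n \<and> R t y}"
  define C where "C = {t \<in> D. \<exists>y\<in>X - D. F t = F y}"
  have "Z = {x @ y | x y. x \<in> X \<and> y \<in> X \<and> F x = F y} \<inter> {t @ y | t y. t \<in> D \<and> y \<in> X - D}"
    unfolding Z_def R_def using lengthD[OF X] D(2) by (auto simp: append_eq_append_conv) blast
  then have Z_T: "Z \<in> T (n + n)"
    using pairs product[OF D(1) Diff[OF X D(1)]] by (simp add: Int)
  have "take n ` Z = {t. length t = n \<and> (\<exists>y. length y = n \<and> R t y)}"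
    unfolding Z_def by (rule take_image_append_relation)
  also have "\<dots> = C"
    unfolding C_def R_def using lengthD[OF X] lengthD[OF D(1)] by auto
  finally have C_T: "C \<in> T n"
    using take_image[OF Z_T] by simp
  have fibre_eq: "fibre n Z t = {y \<in> X - D. F t = F y}" if "t \<in> D" for t
    unfolding Z_def fibre_append_relation[OF lengthD[OF D(1) that]] R_def
    using that lengthD[OF X] by auto
  have "{t \<in> D. \<exists>y\<in>X. y \<noteq> t \<and> F t = F y} = C"
    using inj unfolding C_def by (auto dest: inj_onD) metis
  moreover have "dm C \<le> dm (\<Union>t\<in>C. fibre n Z t)"
  proof (rule dim_le_dim_UN_fibres[OF C_T Z_T])
    show "disjoint_family_on (fibre n Z) C"
      unfolding disjoint_family_on_def
    proof (intro ballI impI)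
      fix s t assume st: "s \<in> C" "t \<in> C" "s \<noteq> t"
      then have "F s \<noteq> F t"
        using inj unfolding C_def inj_on_def by auto
      with st fibre_eq show "fibre n Z s \<inter> fibre n Z t = {}"
        unfolding C_def by auto
    qed
    show "fibre n Z t \<noteq> {}" if "t \<in> C" for t
      using that fibre_eq unfolding C_def by auto
  qed
  moreover have "dm (\<Union>t\<in>C. fibre n Z t) \<le> dm (X - D)"
    using fibre_eq
    by (intro dim_mono[OF fibre_Union[OF C_T Z_T] Diff[OF X D(1)]]) (auto simp: C_def)
  ultimately show ?thesis by simp
qed

end

theorem lemma2p3:
  fixes S T :: "nat \<Rightarrow> 'a::linorder list set set"
    and dm :: "'a list set \<Rightarrow> ereal"
    and F :: "'a list \<Rightarrow> 'a list"
    and X D :: "'a list set" and n m :: nat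
  assumes "o_minimal S"
    and "is_structure T"
    and "\<forall>k. S k \<subseteq> T k"
    and "\<forall>k. \<forall>A\<in>T k. open_n k A \<longrightarrow> A \<in> S k"
    and "dim_function S T dm"
    and "X \<in> S n"
    and "\<forall>x\<in>X. length (F x) = m"
    and "{x @ F x | x. x \<in> X} \<in> S (n + m)"
    and "D \<in> T n" and "D \<subseteq> X"
    and "dm (X - D) < dm X"
    and "inj_on F D"
  shows "\<exists>Y\<in>S n. Y \<subseteq> X \<and> dm (X - Y) < dm X \<and> inj_on F Y"
proof -
  interpret S: definable_sets S
    using \<open>o_minimal S\<close> unfolding o_minimal_def by unfold_locales blast
  interpret T: dimension_function T S dm
    using \<open>is_structure T\<close> \<open>dim_function S T dm\<close> by unfold_locales
  define B where "B = {x \<in> X. \<exists>y\<in>X. y \<noteq> x \<and> F x = F y}"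
  have B: "B \<in> S n"
    unfolding B_def using assms(6-8) by (rule S.non_injective_points)
  have X_T: "X \<in> T n" and B_T: "B \<in> T n"
    using \<open>\<forall>k. S k \<subseteq> T k\<close> \<open>X \<in> S n\<close> B by blast+
  have XD_T: "X - D \<in> T n" and BD_T: "B \<inter> D \<in> T n"
    using T.Diff[OF X_T \<open>D \<in> T n\<close>] T.Int[OF B_T \<open>D \<in> T n\<close>] .
  have "{x @ y | x y. x \<in> X \<and> y \<in> X \<and> F x = F y} \<in> T (n + n)"
    using S.equal_value_pairs[OF assms(6-8)] \<open>\<forall>k. S k \<subseteq> T k\<close> by blast
  moreover have "B \<inter> D = {t \<in> D. \<exists>y\<in>X. y \<noteq> t \<and> F t = F y}"
    using \<open>D \<subseteq> X\<close> unfolding B_def by blast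
  ultimately have BD: "dm (B \<inter> D) \<le> dm (X - D)"
    using T.dim_collisions_le_dim_complement[OF X_T assms(9,10,12)] by simp
  have "dm B \<le> dm ((X - D) \<union> (B \<inter> D))"
    by (rule T.dim_mono[OF B_T T.Un[OF XD_T BD_T]]) (auto simp: B_def)
  also have "\<dots> = dm (X - D)"
    using T.dim_Un[OF XD_T BD_T] BD by simp
  also have "\<dots> < dm X"
    by fact
  finally have "dm (X - (X - B)) < dm X"
    by (simp add: B_def Diff_Diff_Int Int_absorb1)
  moreover have "inj_on F (X - B)"
    unfolding B_def inj_on_def by auto
  ultimately show ?thesis
    using S.Diff[OF \<open>X \<in> S n\<close> B] by blast
qed

end
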